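(* Let $p\in(0,1)$, let $C$ be a random symmetric $n\times n$ matrix whose entries on and above the diagonal are independent and equal to $\sqrt{(1-p)/p}$ with probability $p$ and $-\sqrt{p/(1-p)}$ with probability $1-p$. Let $M\in\mathbb{R}^{n\times n}$ be a deterministic matrix, $r_p=\sqrt{(1-p)/p}$, $E=r_p\,M\circ C$, and let $m_E$ be a median of $\|E\|_2$. Then for all $t>0$, $$P\big(|\|E\|_2-m_E|>t\big)\le4\exp\Big(-\frac{p^2}{8\|M\|_\infty^2}t^2\Big).$$ In particular, $$\mathbb{E}\big[\|E\|_2^2\big]\le m_E^2+32\frac{\|M\|_\infty^2}{p^2}+8m_E\sqrt{\frac{2\pi\|M\|_\infty^2}{p^2}}$$ and $$\mathbb{E}\big[\|E\|_2^3\big]\le4m_E^3+12\sqrt{\pi}\Big(\frac{8\|M\|_\infty^2}{p^2}\Big)^{3/2}.$$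
   Context: $\circ$ is the Hadamard product; $\|M\|_\infty=\max_{ij}|M_{ij}|$; $\|\cdot\|_2$ is the spectral norm. *)

theory Defs
  imports "HOL-Probability.Probability"
begin

definition hadamard :: "real^'n^'m \<Rightarrow> real^'n^'m \<Rightarrow> real^'n^'m" where
  "hadamard A B = (\<chi> i j. A $ i $ j * B $ i $ j)"

definition spec_norm :: "real^'n^'m \<Rightarrow> real" where
  "spec_norm A = onorm (\<lambda>x. A *v x)"

definition max_abs_entry :: "real^'n^'m \<Rightarrow> real" where
  "max_abs_entry A = Max {\<bar>A $ i $ j\<bar> | i j. True}"

text \<open>Index set of the independent entries of a symmetric matrix:
  unordered pairs {i,j} (i = j allowed), i.e. the entries on and above the diagonal.\<close>
definition sym_pairs :: "'n set set" where
  "sym_pairs = {{i, j} | i j. True}"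

definition sign_pmf :: "real \<Rightarrow> ('n::finite set \<Rightarrow> bool) pmf" where
  "sign_pmf p = Pi_pmf sym_pairs False (\<lambda>_. bernoulli_pmf p)"

definition C_mat :: "real \<Rightarrow> ('n::finite set \<Rightarrow> bool) \<Rightarrow> real^'n^'n" where
  "C_mat p b = (\<chi> i j. if b {i, j} then sqrt ((1 - p) / p) else - sqrt (p / (1 - p)))"

definition is_median :: "'a pmf \<Rightarrow> ('a \<Rightarrow> real) \<Rightarrow> real \<Rightarrow> bool" where
  "is_median D X m \<longleftrightarrow>
     measure_pmf.prob D {w. X w \<le> m} \<ge> 1/2 \<and> measure_pmf.prob D {w. X w \<ge> m} \<ge> 1/2"

end

theory Submission
  imports Defs
begin

text \<open>
  The matrix \<open>E\<close> is an affine function of the independent Bernoulli signs, so its spectral norm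
  is a convex function of them which is Lipschitz with constant \<open>\<surd>2 \<parallel>M\<parallel>\<^sub>\<infinity> / p\<close> with respect
  to the Euclidean distance of sign patterns (every off-diagonal sign occurs twice in \<open>E\<close>).
  Talagrand's convex distance inequality \<open>P(A) \<cdot> \<integral> exp (d\<^sub>T(x, A)\<^sup>2 / 4) dP(x) \<le> 1\<close>, proved by
  induction over the coordinates of the product space, turns this into the concentration of
  \<open>\<parallel>E\<parallel>\<^sub>2\<close> around its median: take for \<open>A\<close> the set where \<open>\<parallel>E\<parallel>\<^sub>2\<close> is at most the median, resp.\
  at most the median minus \<open>t\<close>.  The moment bounds follow by integrating the sub-Gaussian tail
  against \<open>k t\<^sup>k\<^sup>-\<^sup>1\<close> and evaluating the resulting Gaussian moments.
\<close>

section \<open>Talagrand's convex distance inequality for Bernoulli product measures\<close>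

inductive_set convex_closure :: "('a \<Rightarrow> real) set \<Rightarrow> ('a \<Rightarrow> real) set" for U where
  base: "s \<in> U \<Longrightarrow> s \<in> convex_closure U"
| comb: "s1 \<in> convex_closure U \<Longrightarrow> s2 \<in> convex_closure U \<Longrightarrow> 0 \<le> l \<Longrightarrow> l \<le> 1 \<Longrightarrow>
     (\<lambda>i. l * s1 i + (1 - l) * s2 i) \<in> convex_closure U"

lemma convex_closure_mono: "s \<in> convex_closure U \<Longrightarrow> U \<subseteq> U' \<Longrightarrow> s \<in> convex_closure U'"
  by (induction s rule: convex_closure.induct) (auto intro: convex_closure.intros)

lemma convex_closure_nonempty: "U \<noteq> {} \<Longrightarrow> convex_closure U \<noteq> {}"
  using convex_closure.base by blast

text \<open>Points of \<open>{0,1}\<^sup>I\<close> are encoded as predicates that are \<open>False\<close> outside \<open>I\<close>.\<close>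

definition bool_funs :: "'i set \<Rightarrow> ('i \<Rightarrow> bool) set" where
  "bool_funs I = (\<lambda>X i. i \<in> X) ` Pow I"

lemma bool_funs_iff: "x \<in> bool_funs I \<longleftrightarrow> (\<forall>i. i \<notin> I \<longrightarrow> \<not> x i)"
proof
  assume "x \<in> bool_funs I" then show "\<forall>i. i \<notin> I \<longrightarrow> \<not> x i" unfolding bool_funs_def by auto
next
  assume "\<forall>i. i \<notin> I \<longrightarrow> \<not> x i"
  then have "{i. x i} \<in> Pow I" by auto
  moreover have "x = (\<lambda>i. i \<in> {i. x i})" by auto
  ultimately show "x \<in> bool_funs I" unfolding bool_funs_def by blast
qed

lemma finite_bool_funs: "finite I \<Longrightarrow> finite (bool_funs I)"
  unfolding bool_funs_def by simp

lemma bool_funs_empty: "bool_funs {} = {\<lambda>_. False}"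
  by (auto simp: bool_funs_iff)

lemma sum_bool_funs_insert:
  assumes "a \<notin> I" "finite I"
  shows "(\<Sum>x\<in>bool_funs (insert a I). h x)
           = (\<Sum>z\<in>bool_funs I. h (z(a:=True))) + (\<Sum>z\<in>bool_funs I. h (z(a:=False)))"
proof -
  have split: "bool_funs (insert a I)
      = (\<lambda>z. z(a:=True)) ` bool_funs I \<union> (\<lambda>z. z(a:=False)) ` bool_funs I"
  proof (intro equalityI subsetI)
    fix x assume x: "x \<in> bool_funs (insert a I)"
    have z: "x(a:=False) \<in> bool_funs I" using x by (auto simp: bool_funs_iff)
    have "x = (x(a:=False))(a := x a)" by simp
    then have "x \<in> (\<lambda>z. z(a := x a)) ` bool_funs I" using z by (rule image_eqI)
    then show "x \<in> (\<lambda>z. z(a:=True)) ` bool_funs I \<union> (\<lambda>z. z(a:=False)) ` bool_funs I"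
      by (cases "x a") simp_all
  qed (auto simp: bool_funs_iff)
  have inj: "inj_on (\<lambda>z. z(a:=w)) (bool_funs I)" for w
  proof (rule inj_onI, rule ext)
    fix z z' i assume "z \<in> bool_funs I" "z' \<in> bool_funs I" "z(a:=w) = z'(a:=w)"
    then show "z i = z' i"
      using assms(1) by (cases "i = a") (auto simp: bool_funs_iff dest: fun_cong[where x = i])
  qed
  have disj: "(\<lambda>z. z(a:=True)) ` bool_funs I \<inter> (\<lambda>z. z(a:=False)) ` bool_funs I = {}"
    by (auto dest: fun_cong[where x = a])
  show ?thesis
    unfolding split
    by (subst sum.union_disjoint)
       (use assms finite_bool_funs disj in \<open>auto simp: sum.reindex[OF inj]\<close>)
qed

definition prod_weight :: "(bool \<Rightarrow> real) \<Rightarrow> 'i set \<Rightarrow> ('i \<Rightarrow> bool) \<Rightarrow> real" where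
  "prod_weight q I x = (\<Prod>i\<in>I. q (x i))"

definition wprob :: "(bool \<Rightarrow> real) \<Rightarrow> 'i set \<Rightarrow> ('i \<Rightarrow> bool) set \<Rightarrow> real" where
  "wprob q I A = (\<Sum>x\<in>bool_funs I \<inter> A. prod_weight q I x)"

lemma prod_weight_upd:
  "a \<notin> I \<Longrightarrow> finite I \<Longrightarrow> prod_weight q (insert a I) (z(a:=w)) = q w * prod_weight q I z"
  unfolding prod_weight_def by (auto intro!: prod.cong)

lemma prod_weight_nonneg: "\<forall>b. 0 \<le> q b \<Longrightarrow> 0 \<le> prod_weight q I x"
  unfolding prod_weight_def by (simp add: prod_nonneg)

lemma wprob_eq_sum_if:
  "finite I \<Longrightarrow> wprob q I A = (\<Sum>x\<in>bool_funs I. if x \<in> A then prod_weight q I x else 0)"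
  unfolding wprob_def by (simp add: sum.inter_restrict finite_bool_funs)

lemma wprob_insert:
  assumes "a \<notin> I" "finite I"
  shows "wprob q (insert a I) A
           = q True * wprob q I {z. z(a:=True) \<in> A} + q False * wprob q I {z. z(a:=False) \<in> A}"
proof -
  have fibre: "(if z(a:=w) \<in> A then prod_weight q (insert a I) (z(a:=w)) else 0)
      = q w * (if z \<in> {z. z(a:=w) \<in> A} then prod_weight q I z else 0)" for w z
    using assms by (simp add: prod_weight_upd)
  have "wprob q (insert a I) A
      = (\<Sum>x\<in>bool_funs (insert a I). if x \<in> A then prod_weight q (insert a I) x else 0)"
    using assms by (simp add: wprob_eq_sum_if)
  also have "\<dots> = q True * wprob q I {z. z(a:=True) \<in> A} + q False * wprob q I {z. z(a:=False) \<in> A}"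
    unfolding sum_bool_funs_insert[OF assms] fibre using assms
    by (simp only: wprob_eq_sum_if sum_distrib_left)
  finally show ?thesis .
qed

lemma wprob_mono: "\<forall>b. 0 \<le> q b \<Longrightarrow> finite I \<Longrightarrow> A \<subseteq> B \<Longrightarrow> wprob q I A \<le> wprob q I B"
  unfolding wprob_def by (intro sum_mono2) (auto simp: finite_bool_funs prod_weight_nonneg)

lemma wprob_nonneg: "\<forall>b. 0 \<le> q b \<Longrightarrow> 0 \<le> wprob q I A"
  unfolding wprob_def by (intro sum_nonneg) (auto simp: prod_weight_nonneg)

lemma wprob_empty [simp]: "wprob q I {} = 0"
  unfolding wprob_def by simp

text \<open>
  \<open>disagreement_patterns I A x\<close> is Talagrand's set \<open>U\<^sub>A(x)\<close> of 0/1 vectors \<open>s\<close> on \<open>I\<close> such that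
  some \<open>y \<in> A\<close> agrees with \<open>x\<close> wherever \<open>s\<close> vanishes, and \<open>convex_dist_sq I A x\<close> is the square
  \<open>d\<^sub>T(x, A)\<^sup>2\<close> of the convex distance.
\<close>

definition disagreement_patterns ::
    "'i set \<Rightarrow> ('i \<Rightarrow> bool) set \<Rightarrow> ('i \<Rightarrow> bool) \<Rightarrow> ('i \<Rightarrow> real) set" where
  "disagreement_patterns I A x =
     {s. (\<forall>i. s i = 0 \<or> s i = 1) \<and> (\<forall>i. i \<notin> I \<longrightarrow> s i = 0) \<and>
         (\<exists>y\<in>A. \<forall>i\<in>I. s i = 0 \<longrightarrow> y i = x i)}"

definition sq_norm_on :: "'i set \<Rightarrow> ('i \<Rightarrow> real) \<Rightarrow> real" where
  "sq_norm_on I s = (\<Sum>i\<in>I. (s i)^2)"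

definition convex_dist_sq :: "'i set \<Rightarrow> ('i \<Rightarrow> bool) set \<Rightarrow> ('i \<Rightarrow> bool) \<Rightarrow> real" where
  "convex_dist_sq I A x = Inf (sq_norm_on I ` convex_closure (disagreement_patterns I A x))"

definition exp_convex_dist :: "(bool \<Rightarrow> real) \<Rightarrow> 'i set \<Rightarrow> ('i \<Rightarrow> bool) set \<Rightarrow> real" where
  "exp_convex_dist q I A = (\<Sum>x\<in>bool_funs I. prod_weight q I x * exp (convex_dist_sq I A x / 4))"

lemma sq_norm_on_nonneg: "0 \<le> sq_norm_on I s"
  unfolding sq_norm_on_def by (simp add: sum_nonneg)

lemma sq_norm_on_insert:
  "a \<notin> I \<Longrightarrow> finite I \<Longrightarrow> sq_norm_on (insert a I) s = (s a)^2 + sq_norm_on I s"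
  unfolding sq_norm_on_def by simp

lemma disagreement_patterns_nonempty: "A \<noteq> {} \<Longrightarrow> disagreement_patterns I A x \<noteq> {}"
proof -
  assume "A \<noteq> {}"
  then have "(\<lambda>i. if i \<in> I then 1 else 0) \<in> disagreement_patterns I A x"
    unfolding disagreement_patterns_def by auto
  then show ?thesis by blast
qed

lemma convex_closure_disagreement_nonempty:
  "A \<noteq> {} \<Longrightarrow> sq_norm_on I ` convex_closure (disagreement_patterns I A x) \<noteq> {}"
  using convex_closure_nonempty[OF disagreement_patterns_nonempty] by blast

lemma convex_closure_disagreement_outside:
  "s \<in> convex_closure (disagreement_patterns I A x) \<Longrightarrow> i \<notin> I \<Longrightarrow> s i = 0"
  by (induction s rule: convex_closure.induct) (auto simp: disagreement_patterns_def)

lemma convex_dist_sq_le: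
  "s \<in> convex_closure (disagreement_patterns I A x) \<Longrightarrow> convex_dist_sq I A x \<le> sq_norm_on I s"
  unfolding convex_dist_sq_def
  by (rule cInf_lower) (auto intro: bdd_belowI[where m=0] sq_norm_on_nonneg)

lemma convex_dist_sq_nonneg: "A \<noteq> {} \<Longrightarrow> 0 \<le> convex_dist_sq I A x"
  unfolding convex_dist_sq_def
  by (rule cInf_greatest[OF convex_closure_disagreement_nonempty]) (auto simp: sq_norm_on_nonneg)

lemma le_convex_dist_sq:
  assumes "A \<noteq> {}"
    and "\<And>s. s \<in> convex_closure (disagreement_patterns I A x) \<Longrightarrow> c \<le> l * sq_norm_on I s"
    and "0 \<le> l"
  shows "c \<le> l * convex_dist_sq I A x"
proof (cases "l = 0")
  case True
  with assms(2) convex_closure_disagreement_nonempty[OF assms(1)] show ?thesis by fastforce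
next
  case False
  with assms(3) have l: "0 < l" by simp
  have "c / l \<le> convex_dist_sq I A x"
    unfolding convex_dist_sq_def
    by (rule cInf_greatest[OF convex_closure_disagreement_nonempty[OF assms(1)]])
       (use assms(2) l in \<open>auto simp: divide_le_eq mult.commute\<close>)
  with l show ?thesis by (simp add: divide_le_eq mult.commute)
qed

lemma exp_convex_dist_nonneg: "\<forall>b. 0 \<le> q b \<Longrightarrow> 0 \<le> exp_convex_dist q I A"
  unfolding exp_convex_dist_def by (intro sum_nonneg mult_nonneg_nonneg) (auto simp: prod_weight_nonneg)

lemma exp_convex_dist_insert:
  assumes "a \<notin> I" "finite I"
  shows "exp_convex_dist q (insert a I) A
    = q True * (\<Sum>z\<in>bool_funs I. prod_weight q I z * exp (convex_dist_sq (insert a I) A (z(a:=True)) / 4))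
    + q False * (\<Sum>z\<in>bool_funs I. prod_weight q I z * exp (convex_dist_sq (insert a I) A (z(a:=False)) / 4))"
  unfolding exp_convex_dist_def sum_bool_funs_insert[OF assms] prod_weight_upd[OF assms]
    sum_distrib_left mult.assoc ..

lemma disagreement_patterns_fibre_subset:
  assumes "a \<notin> I"
  shows "disagreement_patterns I {z. z(a:=w) \<in> A} z \<subseteq> disagreement_patterns (insert a I) A (z(a:=w))"
proof
  fix s assume "s \<in> disagreement_patterns I {z. z(a:=w) \<in> A} z"
  then obtain y where "\<forall>i. s i = 0 \<or> s i = 1" "\<forall>i. i \<notin> I \<longrightarrow> s i = 0"
     "y(a:=w) \<in> A" "\<forall>i\<in>I. s i = 0 \<longrightarrow> y i = z i"
    unfolding disagreement_patterns_def by auto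
  with assms show "s \<in> disagreement_patterns (insert a I) A (z(a:=w))"
    unfolding disagreement_patterns_def by (intro CollectI conjI bexI[of _ "y(a:=w)"]) auto
qed

lemma disagreement_patterns_proj_upd:
  assumes "a \<notin> I" "s \<in> disagreement_patterns I {z. \<exists>w. z(a:=w) \<in> A} z"
  shows "s(a:=1) \<in> disagreement_patterns (insert a I) A (z(a:=w))"
proof -
  obtain y w' where "\<forall>i. s i = 0 \<or> s i = 1" "\<forall>i. i \<notin> I \<longrightarrow> s i = 0"
     "y(a:=w') \<in> A" "\<forall>i\<in>I. s i = 0 \<longrightarrow> y i = z i"
    using assms(2) unfolding disagreement_patterns_def by auto
  with assms(1) show ?thesis
    unfolding disagreement_patterns_def by (intro CollectI conjI bexI[of _ "y(a:=w')"]) auto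
qed

lemma convex_closure_proj_upd:
  assumes "s \<in> convex_closure (disagreement_patterns I {z. \<exists>w. z(a:=w) \<in> A} z)" "a \<notin> I"
  shows "s(a:=1) \<in> convex_closure (disagreement_patterns (insert a I) A (z(a:=w)))"
  using assms(1)
proof (induction s rule: convex_closure.induct)
  case (base s)
  then show ?case using disagreement_patterns_proj_upd[OF assms(2)] by (blast intro: convex_closure.base)
next
  case (comb s1 s2 l)
  have "(\<lambda>i. l * s1 i + (1 - l) * s2 i)(a:=1) = (\<lambda>i. l * (s1(a:=1)) i + (1 - l) * (s2(a:=1)) i)"
    by (auto simp: fun_eq_iff algebra_simps)
  with comb show ?case by (simp add: convex_closure.comb)
qed

lemma convex_dist_sq_insert_le_proj:
  assumes "a \<notin> I" "finite I" "{z. \<exists>w. z(a:=w) \<in> A} \<noteq> {}"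
  shows "convex_dist_sq (insert a I) A (z(a:=w)) \<le> 1 + convex_dist_sq I {z. \<exists>w. z(a:=w) \<in> A} z"
proof -
  have "convex_dist_sq (insert a I) A (z(a:=w)) - 1 \<le> 1 * convex_dist_sq I {z. \<exists>w. z(a:=w) \<in> A} z"
  proof (rule le_convex_dist_sq[OF assms(3)])
    fix s assume s: "s \<in> convex_closure (disagreement_patterns I {z. \<exists>w. z(a:=w) \<in> A} z)"
    have "convex_dist_sq (insert a I) A (z(a:=w)) \<le> sq_norm_on (insert a I) (s(a:=1))"
      by (rule convex_dist_sq_le[OF convex_closure_proj_upd[OF s assms(1)]])
    also have "\<dots> = 1 + sq_norm_on I s"
      using assms by (simp add: sq_norm_on_insert) (auto simp: sq_norm_on_def intro!: sum.cong)
    finally show "convex_dist_sq (insert a I) A (z(a:=w)) - 1 \<le> 1 * sq_norm_on I s" by simp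
  qed simp
  then show ?thesis by simp
qed

lemma power2_convex_comb_le:
  fixes u v :: real
  assumes "0 \<le> l" "l \<le> 1"
  shows "(l * u + (1 - l) * v)^2 \<le> l * u^2 + (1 - l) * v^2"
proof -
  have "l * u^2 + (1 - l) * v^2 - (l * u + (1 - l) * v)^2 = l * (1 - l) * (u - v)^2"
    by (simp add: power2_eq_square algebra_simps)
  moreover have "0 \<le> l * (1 - l) * (u - v)^2" using assms by simp
  ultimately show ?thesis by linarith
qed

text \<open>Mixing a pattern of the fibre over \<open>w\<close> with a pattern of the projection (with coordinate
  \<open>a\<close> set to 1) costs \<open>(1 - l)\<^sup>2\<close> in the new coordinate; convexity of \<open>x\<^sup>2\<close> does the rest.\<close>

lemma convex_dist_sq_insert_le_mix:
  assumes "a \<notin> I" "finite I" "{z. z(a:=w) \<in> A} \<noteq> {}" "{z. \<exists>w. z(a:=w) \<in> A} \<noteq> {}"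
    and l: "0 \<le> l" "l \<le> 1"
  shows "convex_dist_sq (insert a I) A (z(a:=w))
           \<le> (1 - l)^2 + l * convex_dist_sq I {z. z(a:=w) \<in> A} z
              + (1 - l) * convex_dist_sq I {z. \<exists>w. z(a:=w) \<in> A} z"
proof -
  let ?B = "{z. \<exists>w. z(a:=w) \<in> A}" and ?Aw = "{z. z(a:=w) \<in> A}"
  let ?D = "convex_dist_sq (insert a I) A (z(a:=w))"
  have mix: "?D \<le> (1 - l)^2 + l * sq_norm_on I s1 + (1 - l) * sq_norm_on I s2"
    if s1: "s1 \<in> convex_closure (disagreement_patterns I ?Aw z)"
    and s2: "s2 \<in> convex_closure (disagreement_patterns I ?B z)" for s1 s2
  proof -
    let ?t = "\<lambda>i. l * s1 i + (1 - l) * (s2(a:=1)) i"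
    have "?t \<in> convex_closure (disagreement_patterns (insert a I) A (z(a:=w)))"
      by (rule convex_closure.comb[OF convex_closure_mono[OF s1 disagreement_patterns_fibre_subset[OF assms(1)]]
            convex_closure_proj_upd[OF s2 assms(1)] l])
    then have "?D \<le> sq_norm_on (insert a I) ?t" by (rule convex_dist_sq_le)
    also have "\<dots> = (1 - l)^2 + (\<Sum>i\<in>I. (l * s1 i + (1 - l) * s2 i)^2)"
      using assms(1,2) convex_closure_disagreement_outside[OF s1 assms(1)]
      by (simp add: sq_norm_on_insert sq_norm_on_def) (intro sum.cong, auto)
    also have "\<dots> \<le> (1 - l)^2 + (\<Sum>i\<in>I. l * (s1 i)^2 + (1 - l) * (s2 i)^2)"
      by (intro add_left_mono sum_mono power2_convex_comb_le l)
    also have "\<dots> = (1 - l)^2 + l * sq_norm_on I s1 + (1 - l) * sq_norm_on I s2"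
      by (simp add: sq_norm_on_def sum.distrib sum_distrib_left)
    finally show ?thesis .
  qed
  have "?D - (1 - l)^2 - l * convex_dist_sq I ?Aw z \<le> (1 - l) * convex_dist_sq I ?B z"
  proof (rule le_convex_dist_sq[OF assms(4)])
    fix s2 assume s2: "s2 \<in> convex_closure (disagreement_patterns I ?B z)"
    have "?D - (1 - l)^2 - (1 - l) * sq_norm_on I s2 \<le> l * convex_dist_sq I ?Aw z"
      by (rule le_convex_dist_sq[OF assms(3)]) (use mix[OF _ s2] l in \<open>auto simp: algebra_simps\<close>)
    then show "?D - (1 - l)^2 - l * convex_dist_sq I ?Aw z \<le> (1 - l) * sq_norm_on I s2" by linarith
  qed (use l in simp)
  then show ?thesis by linarith
qed

lemma exp_quarter_add_exp_neg_half_le: "exp (1/4) + exp (-1/2) \<le> (2 :: real)"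
proof -
  have "1 + 1/2 \<le> exp (1/2::real)" by (rule exp_ge_add_one_self)
  then have e1: "exp (-1/2::real) \<le> 2/3" by (simp add: exp_minus divide_simps)
  have "3/4 \<le> exp (-1/4::real)" using exp_ge_add_one_self[of "-1/4::real"] by simp
  then have "exp (1/4::real) * (3/4) \<le> exp (1/4) * exp (-1/4)" by (intro mult_left_mono) simp_all
  then have e2: "exp (1/4::real) \<le> 4/3" by (simp add: exp_add[symmetric])
  from e1 e2 show ?thesis by simp
qed

lemma one_minus_mult_exp_le_1:
  fixes u :: real
  assumes "0 \<le> u" "u \<le> 1/2"
  shows "(1 - 2*u) * exp (2*u - u^2) \<le> 1"
proof -
  let ?k = "\<lambda>x::real. (1 - 2*x) * exp (2*x - x^2)"
  have "?k u \<le> ?k 0"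
  proof (rule DERIV_nonpos_imp_nonincreasing[OF assms(1)])
    fix x assume x: "0 \<le> x" "x \<le> u"
    have "(?k has_real_derivative (exp (2*x - x^2) * (2*x*(2*x - 3)))) (at x)"
      by (auto intro!: derivative_eq_intros simp: algebra_simps power2_eq_square)
    moreover have "exp (2*x - x^2) * (2*x*(2*x - 3)) \<le> 0"
      using x assms by (intro mult_nonneg_nonpos) auto
    ultimately show "\<exists>y. (?k has_real_derivative y) (at x) \<and> y \<le> 0" by blast
  qed
  then show ?thesis by simp
qed

lemma exp_diff_power2_add_exp_neg_le:
  fixes u :: real
  assumes "0 \<le> u" "u \<le> 1/2"
  shows "exp (u - u^2) + exp (-u) \<le> 2"
proof -
  let ?h = "\<lambda>x::real. exp (x - x^2) + exp (-x)"
  have "?h u \<le> ?h 0"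
  proof (rule DERIV_nonpos_imp_nonincreasing[OF assms(1)])
    fix x assume x: "0 \<le> x" "x \<le> u"
    have "(?h has_real_derivative ((1 - 2*x) * exp (x - x^2) - exp (-x))) (at x)"
      by (auto intro!: derivative_eq_intros simp: algebra_simps power2_eq_square)
    moreover have "(1 - 2*x) * exp (x - x^2) = exp (-x) * ((1 - 2*x) * exp (2*x - x^2))"
      by (simp add: exp_add[symmetric])
    moreover have "\<dots> \<le> exp (-x)"
      using one_minus_mult_exp_le_1[of x] x assms by (simp add: mult_left_le)
    ultimately show "\<exists>y. (?h has_real_derivative y) (at x) \<and> y \<le> 0" by force
  qed
  then show ?thesis by simp
qed

text \<open>\<open>l = 1 + 2 ln r\<close> minimises \<open>exp ((1 - l)\<^sup>2 / 4) r\<^sup>-\<^sup>l\<close>; with \<open>u = - ln r\<close> the value is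
  \<open>exp (u - u\<^sup>2)\<close>.\<close>

lemma talagrand_optimal_mix_bound:
  fixes r :: real
  assumes "exp (-1/2) < r" "r \<le> 1"
  shows "exp ((1 - (1 + 2 * ln r))^2 / 4) * r powr (- (1 + 2 * ln r)) \<le> 2 - r"
proof -
  have r: "0 < r" using assms(1) by (meson exp_gt_zero less_trans)
  define u where "u = - ln r"
  have "-1/2 < ln r" using assms(1) r by (metis ln_exp ln_less_cancel_iff exp_gt_zero)
  then have u: "0 \<le> u" "u \<le> 1/2" using assms r by (auto simp: u_def)
  have "exp ((1 - (1 + 2 * ln r))^2 / 4) * r powr (- (1 + 2 * ln r)) = exp (u - u^2)"
    using r by (simp add: powr_def exp_add[symmetric] u_def power2_eq_square algebra_simps)
  also have "\<dots> \<le> 2 - r" using exp_diff_power2_add_exp_neg_le[OF u] r by (simp add: u_def)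
  finally show ?thesis .
qed

lemma weighted_Hoelder_sum:
  fixes w a b :: "'x \<Rightarrow> real"
  assumes "finite S" "\<And>x. x \<in> S \<Longrightarrow> 0 \<le> w x" "\<And>x. x \<in> S \<Longrightarrow> 0 < a x"
      "\<And>x. x \<in> S \<Longrightarrow> 0 < b x" "0 \<le> l" "l \<le> 1"
  shows "(\<Sum>x\<in>S. w x * (a x powr l * b x powr (1 - l)))
          \<le> (\<Sum>x\<in>S. w x * a x) powr l * (\<Sum>x\<in>S. w x * b x) powr (1 - l)"
proof (cases "\<forall>x\<in>S. w x = 0")
  case True then show ?thesis by simp
next
  case False
  let ?A = "\<Sum>x\<in>S. w x * a x" and ?B = "\<Sum>x\<in>S. w x * b x"
  let ?C = "?A powr l * ?B powr (1 - l)"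
  obtain x0 where "x0 \<in> S" "w x0 \<noteq> 0" using False by blast
  then have "0 < w x0 * a x0" "0 < w x0 * b x0"
    using assms(2-4) by (simp_all add: order_le_neq_trans)
  then have A: "0 < ?A" and B: "0 < ?B"
    using \<open>x0 \<in> S\<close> assms(1,2,3,4) by (auto intro!: sum_pos2[where i = x0] simp: less_imp_le)
  have Young: "a x powr l * b x powr (1 - l) \<le> ?C * (l * (a x / ?A) + (1 - l) * (b x / ?B))"
    if x: "x \<in> S" for x
  proof -
    have "(a x / ?A) powr l * (b x / ?B) powr (1 - l) \<le> l * (a x / ?A) + (1 - l) * (b x / ?B)"
      using assms(3,4)[OF x] A B assms(5,6) by (intro Youngs_inequality_0) auto
    moreover have "(a x / ?A) powr l * (b x / ?B) powr (1 - l) = (a x powr l * b x powr (1 - l)) / ?C"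
      using assms(3,4)[OF x] A B by (simp add: powr_divide)
    moreover have "0 < ?C" using A B by simp
    ultimately show ?thesis by (simp add: divide_le_eq mult.commute)
  qed
  have "(\<Sum>x\<in>S. w x * (a x powr l * b x powr (1 - l)))
        \<le> (\<Sum>x\<in>S. w x * (?C * (l * (a x / ?A) + (1 - l) * (b x / ?B))))"
    using Young assms(2) by (intro sum_mono mult_left_mono) auto
  also have "\<dots> = (\<Sum>x\<in>S. (?C * l / ?A) * (w x * a x) + (?C * (1 - l) / ?B) * (w x * b x))"
    by (intro sum.cong refl) (simp add: algebra_simps)
  also have "\<dots> = (?C * l / ?A) * ?A + (?C * (1 - l) / ?B) * ?B"
    by (simp only: sum.distrib sum_distrib_left[symmetric])
  also have "\<dots> = ?C * l + ?C * (1 - l)" using A B by simp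
  also have "\<dots> = ?C" by (simp add: algebra_simps)
  finally show ?thesis .
qed

lemma powr_ratio_identity:
  fixes PB Pw l :: real
  assumes "0 < PB" "0 < Pw"
  shows "PB * ((1 / Pw) powr l * (1 / PB) powr (1 - l)) = (Pw / PB) powr (- l)"
proof -
  have "PB * ((1 / Pw) powr l * (1 / PB) powr (1 - l))
      = exp (ln PB) * (exp (l * (- ln Pw)) * exp ((1 - l) * (- ln PB)))"
    using assms by (simp add: powr_def ln_div)
  also have "\<dots> = exp (- l * (ln Pw - ln PB))"
    by (simp add: exp_add[symmetric] algebra_simps)
  also have "\<dots> = (Pw / PB) powr (- l)"
    using assms by (simp add: powr_def ln_div)
  finally show ?thesis .
qed

lemma talagrand_fibre_bound_proj:
  fixes q :: "bool \<Rightarrow> real" and a :: 'i and A :: "('i \<Rightarrow> bool) set"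
  defines "B \<equiv> {z. \<exists>w. z(a:=w) \<in> A}"
  assumes q0: "\<forall>b. 0 \<le> q b" and a: "a \<notin> I" "finite I"
    and B: "0 < wprob q I B" "wprob q I B * exp_convex_dist q I B \<le> 1"
  shows "wprob q I B * (\<Sum>z\<in>bool_funs I.
           prod_weight q I z * exp (convex_dist_sq (insert a I) A (z(a:=w)) / 4)) \<le> exp (1/4)"
proof -
  have "B \<noteq> {}" using B(1) by auto
  have "(\<Sum>z\<in>bool_funs I. prod_weight q I z * exp (convex_dist_sq (insert a I) A (z(a:=w)) / 4))
        \<le> (\<Sum>z\<in>bool_funs I. prod_weight q I z * (exp (1/4) * exp (convex_dist_sq I B z / 4)))"
  proof (intro sum_mono mult_left_mono)
    fix z
    have "convex_dist_sq (insert a I) A (z(a:=w)) \<le> 1 + convex_dist_sq I B z"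
      using convex_dist_sq_insert_le_proj[OF a] \<open>B \<noteq> {}\<close> unfolding B_def by blast
    then show "exp (convex_dist_sq (insert a I) A (z(a:=w)) / 4) \<le> exp (1/4) * exp (convex_dist_sq I B z / 4)"
      by (simp add: exp_add[symmetric] add_divide_distrib)
  qed (simp add: prod_weight_nonneg q0)
  also have "\<dots> = exp (1/4) * exp_convex_dist q I B"
    unfolding exp_convex_dist_def by (simp add: sum_distrib_left algebra_simps)
  finally show ?thesis
    using B mult_left_mono[of _ _ "wprob q I B"] by (smt (verit) exp_gt_zero mult.left_commute mult_left_le)
qed

lemma talagrand_fibre_bound_mix:
  fixes q :: "bool \<Rightarrow> real" and a :: 'i and A :: "('i \<Rightarrow> bool) set" and w :: bool
  defines "B \<equiv> {z. \<exists>w. z(a:=w) \<in> A}" and "Aw \<equiv> {z. z(a:=w) \<in> A}"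
  assumes q0: "\<forall>b. 0 \<le> q b" and a: "a \<notin> I" "finite I" and l: "0 \<le> l" "l \<le> 1"
    and B: "0 < wprob q I B" "wprob q I B * exp_convex_dist q I B \<le> 1"
    and Aw: "0 < wprob q I Aw" "wprob q I Aw * exp_convex_dist q I Aw \<le> 1"
  shows "wprob q I B * (\<Sum>z\<in>bool_funs I.
           prod_weight q I z * exp (convex_dist_sq (insert a I) A (z(a:=w)) / 4))
         \<le> exp ((1 - l)^2 / 4) * (wprob q I Aw / wprob q I B) powr (- l)"
proof -
  let ?e = "\<lambda>C z. exp (convex_dist_sq I C z / 4)"
  have "B \<noteq> {}" "Aw \<noteq> {}" using B(1) Aw(1) by auto
  have "(\<Sum>z\<in>bool_funs I. prod_weight q I z * exp (convex_dist_sq (insert a I) A (z(a:=w)) / 4))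
        \<le> (\<Sum>z\<in>bool_funs I. prod_weight q I z * (exp ((1 - l)^2 / 4) * (?e Aw z powr l * ?e B z powr (1 - l))))"
  proof (intro sum_mono mult_left_mono)
    fix z
    have "convex_dist_sq (insert a I) A (z(a:=w))
            \<le> (1 - l)^2 + l * convex_dist_sq I Aw z + (1 - l) * convex_dist_sq I B z"
      using convex_dist_sq_insert_le_mix[OF a _ _ l] \<open>B \<noteq> {}\<close> \<open>Aw \<noteq> {}\<close>
      unfolding B_def Aw_def by blast
    then have "exp (convex_dist_sq (insert a I) A (z(a:=w)) / 4)
      \<le> exp ((1 - l)^2 / 4 + (l * (convex_dist_sq I Aw z / 4) + (1 - l) * (convex_dist_sq I B z / 4)))"
      by (simp add: field_simps)
    then show "exp (convex_dist_sq (insert a I) A (z(a:=w)) / 4)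
               \<le> exp ((1 - l)^2 / 4) * (?e Aw z powr l * ?e B z powr (1 - l))"
      by (simp add: powr_def exp_add)
  qed (simp add: prod_weight_nonneg q0)
  also have "\<dots> = exp ((1 - l)^2 / 4) *
                   (\<Sum>z\<in>bool_funs I. prod_weight q I z * (?e Aw z powr l * ?e B z powr (1 - l)))"
    by (simp add: sum_distrib_left algebra_simps)
  also have "\<dots> \<le> exp ((1 - l)^2 / 4) * (exp_convex_dist q I Aw powr l * exp_convex_dist q I B powr (1 - l))"
    unfolding exp_convex_dist_def
    by (intro mult_left_mono weighted_Hoelder_sum) (auto simp: finite_bool_funs a prod_weight_nonneg q0 l)
  also have "\<dots> \<le> exp ((1 - l)^2 / 4) * ((1 / wprob q I Aw) powr l * (1 / wprob q I B) powr (1 - l))"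
    using B Aw l exp_convex_dist_nonneg[OF q0]
    by (intro mult_left_mono mult_mono powr_mono2) (auto simp: field_simps)
  finally show ?thesis
    using B(1) powr_ratio_identity[OF B(1) Aw(1)]
    by (smt (verit) exp_gt_zero mult.left_commute mult_left_mono)
qed

lemma talagrand_fibre_bound:
  fixes q :: "bool \<Rightarrow> real" and a :: 'i and A :: "('i \<Rightarrow> bool) set" and w :: bool
  defines "B \<equiv> {z. \<exists>w. z(a:=w) \<in> A}" and "Aw \<equiv> {z. z(a:=w) \<in> A}"
  assumes q0: "\<forall>b. 0 \<le> q b" and a: "a \<notin> I" "finite I"
    and IH: "\<And>C. wprob q I C * exp_convex_dist q I C \<le> 1" and B: "0 < wprob q I B"
  shows "wprob q I B * (\<Sum>z\<in>bool_funs I.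
           prod_weight q I z * exp (convex_dist_sq (insert a I) A (z(a:=w)) / 4))
         \<le> 2 - wprob q I Aw / wprob q I B"
proof -
  let ?r = "wprob q I Aw / wprob q I B"
  have "wprob q I Aw \<le> wprob q I B"
    unfolding Aw_def B_def by (intro wprob_mono q0 a) blast
  then have r1: "?r \<le> 1" using B by simp
  show ?thesis
  proof (cases "?r \<le> exp (-1/2)")
    case True
    then show ?thesis
      using talagrand_fibre_bound_proj[OF q0 a B[unfolded B_def] IH, where w = w]
        exp_quarter_add_exp_neg_half_le
      unfolding B_def by linarith
  next
    case False
    then have r: "exp (-1/2) < ?r" by simp
    then have "0 < ?r" by (meson exp_gt_zero less_trans)
    then have Aw: "0 < wprob q I Aw" using B by (simp add: zero_less_divide_iff)
    define l where "l = 1 + 2 * ln ?r"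
    have "-1/2 < ln ?r" using r \<open>0 < ?r\<close> by (metis ln_exp ln_less_cancel_iff exp_gt_zero)
    moreover have "ln ?r \<le> 0" using r1 \<open>0 < ?r\<close> by simp
    ultimately have l: "0 \<le> l" "l \<le> 1" by (auto simp: l_def)
    have "wprob q I B * (\<Sum>z\<in>bool_funs I.
           prod_weight q I z * exp (convex_dist_sq (insert a I) A (z(a:=w)) / 4))
         \<le> exp ((1 - l)^2 / 4) * ?r powr (- l)"
      using talagrand_fibre_bound_mix[OF q0 a l B[unfolded B_def] IH Aw[unfolded Aw_def] IH]
      unfolding B_def Aw_def .
    also have "\<dots> \<le> 2 - ?r"
      unfolding l_def by (rule talagrand_optimal_mix_bound[OF r r1])
    finally show ?thesis .
  qed
qed

lemma talagrand_convex_distance_empty: "wprob q {} A * exp_convex_dist q {} A \<le> 1"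
proof (cases "(\<lambda>_. False) \<in> A")
  case True
  then have "A \<noteq> {}" by blast
  then obtain s where "s \<in> convex_closure (disagreement_patterns {} A (\<lambda>_. False))"
    using convex_closure_nonempty[OF disagreement_patterns_nonempty] by blast
  then have "convex_dist_sq {} A (\<lambda>_. False) \<le> 0"
    using convex_dist_sq_le by (fastforce simp: sq_norm_on_def)
  then have "convex_dist_sq {} A (\<lambda>_. False) = 0"
    using convex_dist_sq_nonneg[OF \<open>A \<noteq> {}\<close>] by (intro antisym)
  then show ?thesis
    using True by (simp add: wprob_def exp_convex_dist_def bool_funs_empty prod_weight_def)
qed (simp add: wprob_def bool_funs_empty)

theorem talagrand_convex_distance:
  assumes q0: "\<forall>b. 0 \<le> q b" and q1: "q True + q False = 1" and "finite I"
  shows "wprob q I A * exp_convex_dist q I A \<le> 1"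
  using \<open>finite I\<close>
proof (induction I arbitrary: A rule: finite_induct)
  case empty
  show ?case by (rule talagrand_convex_distance_empty)
next
  case (insert a I)
  let ?B = "{z. \<exists>w. z(a:=w) \<in> A}" and ?Aw = "\<lambda>w. {z. z(a:=w) \<in> A}"
  let ?PB = "wprob q I ?B"
  have P: "wprob q (insert a I) A = q True * wprob q I (?Aw True) + q False * wprob q I (?Aw False)"
    by (rule wprob_insert[OF insert(2,1)])
  have Aw_le: "wprob q I (?Aw w) \<le> ?PB" for w
    by (rule wprob_mono[OF q0 insert(1)]) blast
  show ?case
  proof (cases "?PB = 0")
    case True
    then have "wprob q I (?Aw w) = 0" for w
      using Aw_le[of w] wprob_nonneg[OF q0, of I "?Aw w"] by simp
    then show ?thesis using P by simp
  next
    case False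
    then have PB: "0 < ?PB" using wprob_nonneg[OF q0, of I ?B] by simp
    define u where "u = wprob q (insert a I) A / ?PB"
    have "0 \<le> u" unfolding u_def using PB wprob_nonneg[OF q0, of "insert a I" A] by simp
    have "?PB * exp_convex_dist q (insert a I) A
          \<le> q True * (2 - wprob q I (?Aw True) / ?PB) + q False * (2 - wprob q I (?Aw False) / ?PB)"
      unfolding exp_convex_dist_insert[OF insert(2,1)] distrib_left mult.left_commute[of ?PB]
      using talagrand_fibre_bound[OF q0 insert(2,1) insert.IH PB] q0
      by (intro add_mono mult_left_mono) auto
    also have "\<dots> = 2 - u"
      using q1 P by (simp add: u_def algebra_simps add_divide_distrib)
    finally have "u * (?PB * exp_convex_dist q (insert a I) A) \<le> u * (2 - u)"
      using \<open>0 \<le> u\<close> by (rule mult_left_mono)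
    moreover have "u * (?PB * exp_convex_dist q (insert a I) A)
                   = wprob q (insert a I) A * exp_convex_dist q (insert a I) A"
      using PB by (simp add: u_def)
    moreover have "u * (2 - u) \<le> 1"
      using zero_le_power2[of "u - 1"] by (simp add: power2_eq_square algebra_simps)
    ultimately show ?thesis by linarith
  qed
qed

lemma talagrand_separation:
  assumes q0: "\<forall>b. 0 \<le> q b" and q1: "q True + q False = 1" and "finite I"
    and L: "0 < L" and t: "0 \<le> t"
    and lip: "\<And>x s. s \<in> convex_closure (disagreement_patterns I A x) \<Longrightarrow> f x \<le> a + L * sqrt (sq_norm_on I s)"
    and X: "\<And>x. x \<in> X \<Longrightarrow> a + t \<le> f x"
  shows "wprob q I A * wprob q I X * exp (t^2 / (4 * L^2)) \<le> 1"
proof (cases "A = {}")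
  case False
  have dist: "t^2 / L^2 \<le> convex_dist_sq I A x" if x: "x \<in> X" for x
  proof -
    have "t^2 / L^2 \<le> 1 * convex_dist_sq I A x"
    proof (rule le_convex_dist_sq[OF False])
      fix s assume "s \<in> convex_closure (disagreement_patterns I A x)"
      then have "t \<le> L * sqrt (sq_norm_on I s)" using lip X[OF x] by fastforce
      then have "t / L \<le> sqrt (sq_norm_on I s)" using L by (simp add: divide_le_eq mult.commute)
      then have "(t / L)^2 \<le> (sqrt (sq_norm_on I s))^2" by (rule power_mono) (use t L in simp)
      then show "t^2 / L^2 \<le> 1 * sq_norm_on I s" by (simp add: power_divide sq_norm_on_nonneg)
    qed simp
    then show ?thesis by simp
  qed
  have "wprob q I X * exp (t^2 / (4 * L^2))
        = (\<Sum>x\<in>bool_funs I \<inter> X. prod_weight q I x * exp (t^2 / (4 * L^2)))"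
    unfolding wprob_def by (simp add: sum_distrib_right)
  also have "\<dots> \<le> (\<Sum>x\<in>bool_funs I \<inter> X. prod_weight q I x * exp (convex_dist_sq I A x / 4))"
    using dist by (intro sum_mono mult_left_mono) (auto simp: prod_weight_nonneg q0 field_simps)
  also have "\<dots> \<le> exp_convex_dist q I A"
    unfolding exp_convex_dist_def
    by (rule sum_mono2) (auto simp: finite_bool_funs \<open>finite I\<close> prod_weight_nonneg q0)
  finally have "wprob q I A * (wprob q I X * exp (t^2 / (4 * L^2))) \<le> wprob q I A * exp_convex_dist q I A"
    by (intro mult_left_mono wprob_nonneg q0)
  also have "\<dots> \<le> 1" by (rule talagrand_convex_distance[OF q0 q1 \<open>finite I\<close>])
  finally show ?thesis by (simp add: mult.assoc)
qed simp

section \<open>The spectral norm of the random matrix\<close>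

lemma norm_power2_vec: "(norm (v :: real^'n))^2 = (\<Sum>j\<in>UNIV. (v$j)^2)"
  unfolding power2_norm_eq_inner inner_vec_def by (simp add: power2_eq_square)

lemma spec_norm_le_frobenius:
  fixes X :: "real^'n^'m"
  shows "spec_norm X \<le> sqrt (\<Sum>i\<in>UNIV. \<Sum>j\<in>UNIV. (X$i$j)^2)"
  unfolding spec_norm_def
proof (rule onorm_bound)
  fix v :: "real^'n"
  have "(norm (X *v v))^2 = (\<Sum>i\<in>UNIV. (\<Sum>j\<in>UNIV. X$i$j * v$j)^2)"
    by (simp add: norm_power2_vec matrix_vector_mult_def)
  also have "\<dots> \<le> (\<Sum>i\<in>UNIV. (\<Sum>j\<in>UNIV. (X$i$j)^2) * (\<Sum>j\<in>UNIV. (v$j)^2))"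
    by (intro sum_mono Cauchy_Schwarz_ineq_sum)
  also have "\<dots> = (sqrt (\<Sum>i\<in>UNIV. \<Sum>j\<in>UNIV. (X$i$j)^2) * norm v)^2"
    by (simp add: power_mult_distrib norm_power2_vec sum_distrib_right sum_nonneg)
  finally show "norm (X *v v) \<le> sqrt (\<Sum>i\<in>UNIV. \<Sum>j\<in>UNIV. (X$i$j)^2) * norm v"
    by (rule power2_le_imp_le) (simp add: sum_nonneg)
qed (simp add: sum_nonneg)

lemma spec_norm_triangle: "spec_norm (X + Y) \<le> spec_norm X + spec_norm (Y :: real^'n^'m)"
  unfolding spec_norm_def matrix_vector_mult_add_rdistrib
  by (rule onorm_triangle) (rule matrix_vector_mul_bounded_linear)+

lemma spec_norm_scaleR: "spec_norm (c *\<^sub>R X) = \<bar>c\<bar> * spec_norm (X :: real^'n^'m)"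
  unfolding spec_norm_def scaleR_matrix_vector_assoc[symmetric]
  by (rule onorm_scaleR) (rule matrix_vector_mul_bounded_linear)

lemma spec_norm_nonneg: "0 \<le> spec_norm (X :: real^'n^'m)"
  unfolding spec_norm_def by (rule onorm_pos_le) (rule matrix_vector_mul_bounded_linear)

lemma abs_le_max_abs_entry: "\<bar>M$i$j\<bar> \<le> max_abs_entry (M :: real^'n::finite^'m::finite)"
  unfolding max_abs_entry_def
proof (rule Max_ge)
  have "{\<bar>M $ i $ j\<bar> |i j. True} = (\<lambda>(i, j). \<bar>M $ i $ j\<bar>) ` UNIV" by auto
  then show "finite {\<bar>M $ i $ j\<bar> |i j. True}" by simp
qed blast

lemma max_abs_entry_nonneg: "0 \<le> max_abs_entry (M :: real^'n::finite^'m::finite)"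
  using abs_le_max_abs_entry[of M] abs_ge_zero order_trans by blast

lemma spec_norm_eq_0_if_max_abs_entry_eq_0:
  "max_abs_entry M = 0 \<Longrightarrow> spec_norm (hadamard M (C :: real^'n::finite^'m::finite)) = 0"
  using spec_norm_le_frobenius[of "hadamard M C"] spec_norm_nonneg[of "hadamard M C"]
    abs_le_max_abs_entry[of M] by (simp add: hadamard_def)

definition real_bits :: "('i \<Rightarrow> bool) \<Rightarrow> 'i \<Rightarrow> real" where
  "real_bits b = (\<lambda>P. if b P then 1 else 0)"

text \<open>\<open>E\<close> extended affinely to fractional sign vectors \<open>\<theta>\<close>; at the indicator of the signs it
  is \<open>E\<close> itself, and affinity lets the norm bound pass to convex combinations.\<close>

definition hadamard_affine :: "real \<Rightarrow> real^'n^'n \<Rightarrow> ('n set \<Rightarrow> real) \<Rightarrow> real^'n^'n" where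
  "hadamard_affine p M \<theta> = (\<chi> i j. M$i$j * (\<theta> {i, j} / p - 1))"

lemma scaled_hadamard_C_eq:
  assumes "0 < p" "p < 1"
  shows "sqrt ((1 - p) / p) *\<^sub>R hadamard M (C_mat p b) = hadamard_affine p M (real_bits b)"
proof -
  have "sqrt ((1 - p) / p) * sqrt ((1 - p) / p) = (1 - p) / p" using assms by simp
  moreover have "sqrt ((1 - p) / p) * sqrt (p / (1 - p)) = 1"
    using assms by (simp add: real_sqrt_mult[symmetric])
  ultimately show ?thesis
    unfolding hadamard_affine_def hadamard_def C_mat_def real_bits_def
    by (simp add: vec_eq_iff) (use assms in \<open>auto simp: field_simps\<close>)
qed

lemma hadamard_affine_convex_comb:
  "hadamard_affine p M (\<lambda>P. l * t1 P + (1 - l) * t2 P)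
     = l *\<^sub>R hadamard_affine p M t1 + (1 - l) *\<^sub>R hadamard_affine p M t2"
  unfolding hadamard_affine_def by (simp add: vec_eq_iff divide_inverse algebra_simps)

lemma hadamard_affine_diff:
  "hadamard_affine p M t1 - hadamard_affine p M t2 = (\<chi> i j. M$i$j * ((t1 {i, j} - t2 {i, j}) / p))"
  unfolding hadamard_affine_def by (simp add: vec_eq_iff algebra_simps diff_divide_distrib)

lemma spec_norm_hadamard_affine_convex_closure:
  assumes "\<forall>y\<in>A. spec_norm (hadamard_affine p M (real_bits y)) \<le> a"
    and "t \<in> convex_closure (real_bits ` A)"
  shows "spec_norm (hadamard_affine p M t) \<le> a"
  using assms(2)
proof (induction t rule: convex_closure.induct)
  case (base s) then show ?case using assms(1) by auto
next
  case (comb t1 t2 l)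
  have "spec_norm (hadamard_affine p M (\<lambda>P. l * t1 P + (1 - l) * t2 P))
        \<le> spec_norm (l *\<^sub>R hadamard_affine p M t1) + spec_norm ((1 - l) *\<^sub>R hadamard_affine p M t2)"
    unfolding hadamard_affine_convex_comb by (rule spec_norm_triangle)
  also have "\<dots> = l * spec_norm (hadamard_affine p M t1) + (1 - l) * spec_norm (hadamard_affine p M t2)"
    using comb(3,4) by (simp add: spec_norm_scaleR)
  also have "\<dots> \<le> l * a + (1 - l) * a"
    using comb by (intro add_mono mult_left_mono) auto
  finally show ?case by (simp add: algebra_simps)
qed

lemma convex_closure_disagreement_approx:
  assumes "s \<in> convex_closure (disagreement_patterns I A x)"
  shows "\<exists>t\<in>convex_closure (real_bits ` A). \<forall>P\<in>I. \<bar>real_bits x P - t P\<bar> \<le> s P"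
  using assms
proof (induction s rule: convex_closure.induct)
  case (base s)
  then obtain y where s: "\<forall>i. s i = 0 \<or> s i = 1" and y: "y \<in> A" "\<forall>i\<in>I. s i = 0 \<longrightarrow> y i = x i"
    unfolding disagreement_patterns_def by auto
  have "\<bar>real_bits x P - real_bits y P\<bar> \<le> s P" if "P \<in> I" for P
    using s[rule_format, of P] y(2) that by (auto simp: real_bits_def)
  moreover have "real_bits y \<in> convex_closure (real_bits ` A)"
    using y(1) by (auto intro: convex_closure.base)
  ultimately show ?case by blast
next
  case (comb s1 s2 l)
  obtain t1 t2 where t: "t1 \<in> convex_closure (real_bits ` A)" "t2 \<in> convex_closure (real_bits ` A)"
    and "\<forall>P\<in>I. \<bar>real_bits x P - t1 P\<bar> \<le> s1 P" "\<forall>P\<in>I. \<bar>real_bits x P - t2 P\<bar> \<le> s2 P"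
    using comb.IH by blast
  moreover have "\<bar>real_bits x P - (l * t1 P + (1 - l) * t2 P)\<bar>
      \<le> l * \<bar>real_bits x P - t1 P\<bar> + (1 - l) * \<bar>real_bits x P - t2 P\<bar>" for P
  proof -
    have "real_bits x P - (l * t1 P + (1 - l) * t2 P)
          = l * (real_bits x P - t1 P) + (1 - l) * (real_bits x P - t2 P)"
      by (simp add: algebra_simps)
    then show ?thesis using comb(3,4) by (simp add: abs_triangle_ineq[THEN order_trans] abs_mult)
  qed
  ultimately show ?case
    using comb(3,4) convex_closure.comb[OF t]
    by (intro bexI[of _ "\<lambda>P. l * t1 P + (1 - l) * t2 P"])
       (fastforce intro: order_trans add_mono mult_left_mono)+
qed

lemma sum_sym_pairs_le:
  fixes h :: "'n::finite set \<Rightarrow> real"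
  assumes "\<And>P. 0 \<le> h P"
  shows "(\<Sum>i\<in>UNIV. \<Sum>j\<in>UNIV. h {i, j}) \<le> 2 * (\<Sum>P\<in>sym_pairs. h P)"
proof -
  let ?g = "\<lambda>x::'n \<times> 'n. {fst x, snd x}"
  have "(\<Sum>i\<in>UNIV. \<Sum>j\<in>UNIV. h {i, j}) = (\<Sum>x\<in>UNIV \<times> UNIV. h (?g x))"
    by (simp add: sum.cartesian_product split_def)
  also have "\<dots> = (\<Sum>P\<in>(sym_pairs :: 'n set set). \<Sum>x\<in>{x \<in> UNIV \<times> UNIV. ?g x = P}. h (?g x))"
    by (rule sum.group[symmetric]) (auto simp: sym_pairs_def)
  also have "\<dots> = (\<Sum>P\<in>(sym_pairs :: 'n set set). real (card {x \<in> UNIV \<times> UNIV. ?g x = P}) * h P)"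
    by (intro sum.cong refl) simp
  also have "\<dots> \<le> (\<Sum>P\<in>(sym_pairs :: 'n set set). 2 * h P)"
  proof (intro sum_mono mult_right_mono assms)
    fix P :: "'n set" assume "P \<in> sym_pairs"
    then obtain i j where P: "P = {i, j}" unfolding sym_pairs_def by blast
    have "{x \<in> UNIV \<times> UNIV. ?g x = P} \<subseteq> {(i, j), (j, i)}"
      using P by (auto simp: doubleton_eq_iff)
    then have "card {x \<in> UNIV \<times> UNIV. ?g x = P} \<le> card {(i, j), (j, i)}"
      by (rule card_mono[rotated]) simp
    also have "\<dots> \<le> 2" by (cases "i = j") auto
    finally show "real (card {x \<in> UNIV \<times> UNIV. ?g x = P}) \<le> 2" by simp
  qed
  also have "\<dots> = 2 * (\<Sum>P\<in>sym_pairs. h P)" by (simp add: sum_distrib_left)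
  finally show ?thesis .
qed

lemma spec_norm_hadamard_affine_lipschitz:
  fixes M :: "real^'n::finite^'n"
  assumes p: "0 < p" and A: "\<forall>y\<in>A. spec_norm (hadamard_affine p M (real_bits y)) \<le> a"
    and s: "s \<in> convex_closure (disagreement_patterns sym_pairs A x)"
  shows "spec_norm (hadamard_affine p M (real_bits x))
           \<le> a + sqrt 2 * (max_abs_entry M / p) * sqrt (sq_norm_on sym_pairs s)"
proof -
  let ?K = "max_abs_entry M / p"
  obtain t where t: "t \<in> convex_closure (real_bits ` A)"
    and ts: "\<forall>P\<in>sym_pairs. \<bar>real_bits x P - t P\<bar> \<le> s P"
    using convex_closure_disagreement_approx[OF s] by blast
  let ?D = "(\<chi> i j. M$i$j * ((real_bits x {i, j} - t {i, j}) / p)) :: real^'n^'n"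
  have "spec_norm (hadamard_affine p M (real_bits x)) = spec_norm (hadamard_affine p M t + ?D)"
    unfolding hadamard_affine_diff[symmetric] by simp
  also have "\<dots> \<le> a + sqrt (\<Sum>i\<in>UNIV. \<Sum>j\<in>UNIV. (?D$i$j)^2)"
    by (intro order_trans[OF spec_norm_triangle] add_mono
          spec_norm_hadamard_affine_convex_closure[OF A t] spec_norm_le_frobenius)
  also have "\<dots> \<le> a + sqrt (\<Sum>i\<in>UNIV. \<Sum>j\<in>UNIV. ?K^2 * (s {i, j})^2)"
  proof (intro add_left_mono real_sqrt_le_mono sum_mono)
    fix i j :: 'n
    have "{i, j} \<in> sym_pairs" unfolding sym_pairs_def by blast
    then have "\<bar>M$i$j\<bar> * \<bar>real_bits x {i, j} - t {i, j}\<bar> / p \<le> max_abs_entry M * s {i, j} / p"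
      using ts abs_le_max_abs_entry[of M i j] p by (intro divide_right_mono mult_mono) auto
    then have "\<bar>?D$i$j\<bar> \<le> ?K * s {i, j}" using p by (simp add: abs_mult)
    then have "\<bar>?D$i$j\<bar>^2 \<le> (?K * s {i, j})^2" by (rule power_mono) simp
    then show "(?D$i$j)^2 \<le> ?K^2 * (s {i, j})^2" by (simp only: power2_abs power_mult_distrib)
  qed
  also have "\<dots> \<le> a + sqrt (?K^2 * (2 * sq_norm_on sym_pairs s))"
    unfolding sum_distrib_left[symmetric] sq_norm_on_def
    by (intro add_left_mono real_sqrt_le_mono mult_left_mono sum_sym_pairs_le) auto
  also have "\<dots> = a + sqrt 2 * ?K * sqrt (sq_norm_on sym_pairs s)"
    using max_abs_entry_nonneg[of M] p by (simp add: real_sqrt_mult)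
  finally show ?thesis .
qed

definition bernoulli_weight :: "real \<Rightarrow> bool \<Rightarrow> real" where
  "bernoulli_weight p b = (if b then p else 1 - p)"

lemma bernoulli_weight_nonneg: "0 \<le> p \<Longrightarrow> p \<le> 1 \<Longrightarrow> \<forall>b. 0 \<le> bernoulli_weight p b"
  by (simp add: bernoulli_weight_def)

lemma bernoulli_weight_sum: "bernoulli_weight p True + bernoulli_weight p False = 1"
  by (simp add: bernoulli_weight_def)

lemma prob_sign_pmf:
  assumes "0 \<le> p" "p \<le> 1"
  shows "measure_pmf.prob (sign_pmf p) (X :: ('n::finite set \<Rightarrow> bool) set)
           = wprob (bernoulli_weight p) sym_pairs X"
proof -
  have pmf: "pmf (sign_pmf p) x
      = (if x \<in> bool_funs sym_pairs then prod_weight (bernoulli_weight p) sym_pairs x else 0)" for x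
    unfolding sign_pmf_def pmf_Pi[OF finite] bool_funs_iff prod_weight_def bernoulli_weight_def
    using assms by (auto intro!: prod.cong)
  have "measure_pmf.prob (sign_pmf p) X = sum (pmf (sign_pmf p)) X"
    by (rule measure_measure_pmf_finite) simp
  also have "\<dots> = (\<Sum>x\<in>X \<inter> bool_funs sym_pairs. prod_weight (bernoulli_weight p) sym_pairs x)"
    unfolding pmf by (rule sum.inter_restrict[symmetric]) simp
  finally show ?thesis unfolding wprob_def by (simp add: Int_commute)
qed

abbreviation spec_norm_E :: "real \<Rightarrow> real^'n::finite^'n \<Rightarrow> ('n set \<Rightarrow> bool) \<Rightarrow> real" where
  "spec_norm_E p M b \<equiv> spec_norm (sqrt ((1 - p) / p) *\<^sub>R hadamard M (C_mat p b))"

lemma spec_norm_E_separation: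
  fixes M :: "real^'n::finite^'n"
  assumes p: "0 < p" "p < 1" and K: "0 < max_abs_entry M" and "0 \<le> t"
    and A: "\<And>y. y \<in> A \<Longrightarrow> spec_norm_E p M y \<le> a"
    and X: "\<And>x. x \<in> X \<Longrightarrow> a + t \<le> spec_norm_E p M x"
  shows "measure_pmf.prob (sign_pmf p) A * measure_pmf.prob (sign_pmf p) X
          * exp (p^2 / (8 * (max_abs_entry M)^2) * t^2) \<le> 1"
proof -
  let ?L = "sqrt 2 * (max_abs_entry M / p)"
  have E: "spec_norm_E p M b = spec_norm (hadamard_affine p M (real_bits b))" for b
    by (simp only: scaled_hadamard_C_eq[OF p])
  have "wprob (bernoulli_weight p) sym_pairs A * wprob (bernoulli_weight p) sym_pairs X
          * exp (t^2 / (4 * ?L^2)) \<le> 1"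
  proof (rule talagrand_separation[OF bernoulli_weight_nonneg bernoulli_weight_sum finite])
    show "spec_norm_E p M x \<le> a + ?L * sqrt (sq_norm_on sym_pairs s)"
      if "s \<in> convex_closure (disagreement_patterns sym_pairs A x)" for x s
      using spec_norm_hadamard_affine_lipschitz[OF p(1) _ that] A by (simp add: E mult.assoc)
  qed (use p K X \<open>0 \<le> t\<close> in auto)
  moreover have "t^2 / (4 * ?L^2) = p^2 / (8 * (max_abs_entry M)^2) * t^2"
    using p K by (simp add: power_divide power_mult_distrib field_simps)
  ultimately show ?thesis using p by (simp add: prob_sign_pmf)
qed

lemma le_two_exp_of_half_product:
  fixes P Q c :: real
  assumes "1/2 \<le> P" "0 \<le> Q" "P * Q * exp c \<le> 1"
  shows "Q \<le> 2 * exp (- c)"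
proof -
  have "1/2 * Q * exp c \<le> 1"
    using assms by (smt (verit) exp_gt_zero mult_right_mono)
  then show ?thesis by (simp add: exp_minus field_simps)
qed

lemma spec_norm_E_concentration:
  fixes M :: "real^'n::finite^'n"
  assumes p: "0 < p" "p < 1" and med: "is_median (sign_pmf p) (spec_norm_E p M) m" and "0 < t"
  shows "measure_pmf.prob (sign_pmf p) {b. \<bar>spec_norm_E p M b - m\<bar> > t}
           \<le> 4 * exp (- (p^2 / (8 * (max_abs_entry M)^2)) * t^2)"
proof (cases "max_abs_entry M = 0")
  case True
  then have "4 * exp (- (p^2 / (8 * (max_abs_entry M)^2)) * t^2) = 4" by simp
  then show ?thesis
    using measure_pmf.prob_le_1[of "sign_pmf p" "{b. \<bar>spec_norm_E p M b - m\<bar> > t}"] by linarith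
next
  case False
  then have K: "0 < max_abs_entry M" using max_abs_entry_nonneg[of M] by simp
  let ?c = "p^2 / (8 * (max_abs_entry M)^2) * t^2"
  let ?P = "measure_pmf.prob (sign_pmf p)"
  have "?P {b. spec_norm_E p M b \<le> m} * ?P {b. m + t < spec_norm_E p M b} * exp ?c \<le> 1"
    by (rule spec_norm_E_separation[OF p K]) (use \<open>0 < t\<close> in auto)
  then have "?P {b. m + t < spec_norm_E p M b} \<le> 2 * exp (- ?c)"
    using med unfolding is_median_def by (intro le_two_exp_of_half_product) auto
  have "?P {b. spec_norm_E p M b < m - t} * ?P {b. m \<le> spec_norm_E p M b} * exp ?c \<le> 1"
    by (rule spec_norm_E_separation[OF p K, where a = "m - t"]) (use \<open>0 < t\<close> in auto)
  then have "?P {b. spec_norm_E p M b < m - t} \<le> 2 * exp (- ?c)"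
    using med unfolding is_median_def by (intro le_two_exp_of_half_product) (auto simp: mult_ac)
  moreover note \<open>?P {b. m + t < spec_norm_E p M b} \<le> 2 * exp (- ?c)\<close>
  moreover have "{b. \<bar>spec_norm_E p M b - m\<bar> > t}
                 = {b. m + t < spec_norm_E p M b} \<union> {b. spec_norm_E p M b < m - t}" by auto
  ultimately show ?thesis
    using measure_Un_le[of "{b. m + t < spec_norm_E p M b}" "measure_pmf (sign_pmf p)"
        "{b. spec_norm_E p M b < m - t}"] by simp
qed

section \<open>Moments from a sub-Gaussian tail\<close>

lemma has_bochner_integral_indicator_power_deriv:
  assumes y: "0 \<le> y" and k: "1 \<le> k"
  shows "has_bochner_integral lborel (\<lambda>t. indicator {0..<y} t * (real k * t^(k-1))) (y^k)"
proof -
  have int: "integrable lborel (\<lambda>t. (real k * t^(k-1)) * indicator {0..y} t)"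
    by (rule borel_integrable_atLeastAtMost) (auto intro!: continuous_intros)
  have "(LBINT t. indicator {0..y} t *\<^sub>R (real k * t^(k-1))) = y^k - 0^k"
  proof (rule integral_FTC_atLeastAtMost[OF y])
    fix x show "((\<lambda>t. t^k) has_vector_derivative (real k * x^(k-1))) (at x within {0..y})"
      unfolding has_real_derivative_iff_has_vector_derivative[symmetric]
      by (auto intro!: derivative_eq_intros)
  qed (auto intro!: continuous_intros)
  with int k have "has_bochner_integral lborel (\<lambda>t. indicator {0..y} t * (real k * t^(k-1))) (y^k)"
    by (simp add: has_bochner_integral_iff mult.commute)
  moreover have "AE t in lborel. indicator {0..<y} t * (real k * t^(k-1))
                                 = indicator {0..y} t * (real k * t^(k-1))"
    using AE_lborel_singleton[of y] by eventually_elim (auto split: split_indicator)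
  ultimately show ?thesis by (subst has_bochner_integral_cong_AE) auto
qed

lemma has_bochner_integral_gaussian_moment_scaled:
  fixes \<sigma> :: real
  assumes s: "0 < \<sigma>"
    and "has_bochner_integral lborel (\<lambda>x. indicator {0..} x *\<^sub>R (exp (- x\<^sup>2) * x^j)) m"
  shows "has_bochner_integral lborel (\<lambda>t. indicator {0..} t *\<^sub>R (exp (- t\<^sup>2 / \<sigma>) * t^j))
           (sqrt \<sigma> ^ (j+1) * m)"
proof -
  let ?c = "sqrt \<sigma>"
  define G where "G = (\<lambda>t::real. indicator {0..} t *\<^sub>R (exp (- t\<^sup>2 / \<sigma>) * t^j) :: real)"
  have c: "0 < ?c" using s by simp
  have "(\<lambda>x. G (0 + ?c * x)) = (\<lambda>x. ?c ^ j * (indicator {0..} x *\<^sub>R (exp (- x\<^sup>2) * x^j)))"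
  proof
    fix x
    have "indicator {0..} (?c * x) = (indicator {0..} x :: real)"
      using c by (auto split: split_indicator simp: zero_le_mult_iff)
    moreover have "(?c * x)\<^sup>2 / \<sigma> = x\<^sup>2" using s by (simp add: power_mult_distrib)
    ultimately show "G (0 + ?c * x) = ?c ^ j * (indicator {0..} x *\<^sub>R (exp (- x\<^sup>2) * x^j))"
      unfolding G_def by (simp add: power_mult_distrib minus_divide_left[symmetric])
  qed
  then have "has_bochner_integral lborel (\<lambda>x. G (0 + ?c * x)) (?c ^ j * m)"
    using has_bochner_integral_mult_right[OF assms(2)] by simp
  moreover have "(?c ^ (j+1) * m) /\<^sub>R \<bar>?c\<bar> = ?c ^ j * m" using c by simp
  ultimately have "has_bochner_integral lborel (\<lambda>x. G (0 + ?c * x)) ((?c ^ (j+1) * m) /\<^sub>R \<bar>?c\<bar>)"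
    by (simp only:)
  then have "has_bochner_integral lborel G (?c ^ (j+1) * m)"
    by (rule iffD2[OF lborel_has_bochner_integral_real_affine_iff, rotated]) (use c in simp)
  then show ?thesis unfolding G_def .
qed

lemma expectation_finite_pmf:
  "measure_pmf.expectation (D :: 'a::finite pmf) f = (\<Sum>x\<in>UNIV. pmf D x * f x)"
  by (subst integral_measure_pmf_real[of UNIV]) (auto simp: mult.commute)

text \<open>Layer cake: \<open>E Y\<^sup>k = \<integral>\<^sub>0\<^sup>\<infinity> k t\<^sup>k\<^sup>-\<^sup>1 P(Y > t) dt\<close>, written with the finite sum over outcomes
  inside the integral.\<close>

lemma expectation_power_le_of_tail:
  fixes D :: "'a::finite pmf" and Y :: "'a \<Rightarrow> real" and k :: nat
  assumes Y0: "\<And>x. 0 \<le> Y x" and k: "1 \<le> k"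
    and tail: "\<And>t. 0 < t \<Longrightarrow> measure_pmf.prob D {x. t < Y x} \<le> 4 * exp (- t\<^sup>2 / \<sigma>)"
    and G: "has_bochner_integral lborel (\<lambda>t. indicator {0..} t *\<^sub>R (exp (- t\<^sup>2 / \<sigma>) * t^(k-1))) V"
  shows "measure_pmf.expectation D (\<lambda>x. Y x ^ k) \<le> 4 * real k * V"
proof -
  let ?f = "\<lambda>t. \<Sum>x\<in>UNIV. pmf D x * (indicator {0..<Y x} t * (real k * t^(k-1)))"
  let ?g = "\<lambda>t. (4 * real k) * (indicator {0..} t *\<^sub>R (exp (- t\<^sup>2 / \<sigma>) * t^(k-1)))"
  have f: "has_bochner_integral lborel ?f (measure_pmf.expectation D (\<lambda>x. Y x ^ k))"
    unfolding expectation_finite_pmf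
    by (intro has_bochner_integral_sum has_bochner_integral_mult_right
          has_bochner_integral_indicator_power_deriv Y0 k)
  have g: "has_bochner_integral lborel ?g (4 * real k * V)"
    by (rule has_bochner_integral_mult_right[OF G])
  have "?f t \<le> ?g t" for t
  proof (cases "0 \<le> t")
    case True
    have prob: "measure_pmf.prob D {x. t < Y x} \<le> 4 * exp (- t\<^sup>2 / \<sigma>)"
      using tail measure_pmf.prob_le_1[of D] True by (cases "t = 0") (auto intro: order_trans)
    have "?f t = (\<Sum>x\<in>UNIV. if t < Y x then pmf D x * (real k * t^(k-1)) else 0)"
      using True by (intro sum.cong) (auto simp: indicator_def)
    also have "\<dots> = (\<Sum>x\<in>{x. t < Y x}. pmf D x) * (real k * t^(k-1))"
      by (simp add: sum.inter_filter[symmetric] sum_distrib_right)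
    also have "\<dots> \<le> 4 * exp (- t\<^sup>2 / \<sigma>) * (real k * t^(k-1))"
      using prob True by (intro mult_right_mono) (simp_all add: measure_measure_pmf_finite)
    also have "\<dots> = ?g t" using True by simp
    finally show ?thesis .
  qed (simp add: indicator_def)
  then have "integral\<^sup>L lborel ?f \<le> integral\<^sup>L lborel ?g"
    using f g by (intro integral_mono) (auto simp: has_bochner_integral_iff)
  then show ?thesis
    unfolding has_bochner_integral_integral_eq[OF f] has_bochner_integral_integral_eq[OF g] .
qed

lemma median_nonneg:
  assumes "is_median D X m" "\<And>x. 0 \<le> X x"
  shows "0 \<le> m"
proof (rule ccontr)
  assume "\<not> 0 \<le> m"
  then have "{x. X x \<le> m} = {}" using assms(2) by (smt (verit) Collect_empty_eq)
  with assms(1) show False unfolding is_median_def by simp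
qed

lemma abs_dev_moments_le_of_tail:
  fixes D :: "'a::finite pmf" and X :: "'a \<Rightarrow> real"
  assumes s: "0 < \<sigma>"
    and tail: "\<And>t. 0 < t \<Longrightarrow> measure_pmf.prob D {x. t < \<bar>X x - m\<bar>} \<le> 4 * exp (- t\<^sup>2 / \<sigma>)"
  shows "measure_pmf.expectation D (\<lambda>x. \<bar>X x - m\<bar>) \<le> 2 * sqrt (pi * \<sigma>)"
    and "measure_pmf.expectation D (\<lambda>x. \<bar>X x - m\<bar>^2) \<le> 4 * \<sigma>"
    and "measure_pmf.expectation D (\<lambda>x. \<bar>X x - m\<bar>^3) \<le> 3 * sqrt pi * sqrt \<sigma> ^ 3"
proof -
  have moment: "measure_pmf.expectation D (\<lambda>x. \<bar>X x - m\<bar> ^ k) \<le> 4 * real k * V"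
    if "1 \<le> k"
      and "has_bochner_integral lborel (\<lambda>t. indicator {0..} t *\<^sub>R (exp (- t\<^sup>2 / \<sigma>) * t^(k-1))) V"
    for k V
    by (rule expectation_power_le_of_tail[OF abs_ge_zero that(1) tail that(2)])
  have "has_bochner_integral lborel (\<lambda>x::real. indicator {0..} x *\<^sub>R (exp (- x\<^sup>2) * x^0)) (sqrt pi / 2)"
    using gaussian_moment_0 by simp
  from has_bochner_integral_gaussian_moment_scaled[OF s this]
  have "has_bochner_integral lborel (\<lambda>t. indicator {0..} t *\<^sub>R (exp (- t\<^sup>2 / \<sigma>) * t^(1-1)))
          (sqrt \<sigma> * (sqrt pi / 2))" by simp
  from moment[OF _ this] s show "measure_pmf.expectation D (\<lambda>x. \<bar>X x - m\<bar>) \<le> 2 * sqrt (pi * \<sigma>)"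
    by (simp add: real_sqrt_mult)
  have "has_bochner_integral lborel (\<lambda>x::real. indicator {0..} x *\<^sub>R (exp (- x\<^sup>2) * x^1)) (1 / 2)"
    using gaussian_moment_1 by simp
  from has_bochner_integral_gaussian_moment_scaled[OF s this]
  have "has_bochner_integral lborel (\<lambda>t. indicator {0..} t *\<^sub>R (exp (- t\<^sup>2 / \<sigma>) * t^(2-1)))
          (sqrt \<sigma> ^ 2 * (1 / 2))" using s by simp
  from moment[OF _ this] s show "measure_pmf.expectation D (\<lambda>x. \<bar>X x - m\<bar>^2) \<le> 4 * \<sigma>"
    by simp
  have "has_bochner_integral lborel (\<lambda>x::real. indicator {0..} x *\<^sub>R (exp (- x\<^sup>2) * x^2)) (sqrt pi / 4)"
    using gaussian_moment_even_pos[of 1] by simp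
  from has_bochner_integral_gaussian_moment_scaled[OF s this]
  have "has_bochner_integral lborel (\<lambda>t. indicator {0..} t *\<^sub>R (exp (- t\<^sup>2 / \<sigma>) * t^(3-1)))
          (sqrt \<sigma> ^ 3 * (sqrt pi / 4))" by simp
  from moment[OF _ this] show "measure_pmf.expectation D (\<lambda>x. \<bar>X x - m\<bar>^3) \<le> 3 * sqrt pi * sqrt \<sigma> ^ 3"
    by simp
qed

lemma expectation_power2_le_of_median_tail:
  fixes D :: "'a::finite pmf" and X :: "'a \<Rightarrow> real"
  assumes X0: "\<And>x. 0 \<le> X x" and "0 \<le> m" and s: "0 < \<sigma>"
    and tail: "\<And>t. 0 < t \<Longrightarrow> measure_pmf.prob D {x. t < \<bar>X x - m\<bar>} \<le> 4 * exp (- t\<^sup>2 / \<sigma>)"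
  shows "measure_pmf.expectation D (\<lambda>x. X x ^ 2) \<le> m^2 + 4 * \<sigma> + 4 * m * sqrt (pi * \<sigma>)"
proof -
  have "X x ^ 2 \<le> m^2 + 2 * m * \<bar>X x - m\<bar> + \<bar>X x - m\<bar>^2" for x
    using \<open>0 \<le> m\<close> X0[of x] by (smt (verit) power2_sum power_mono)
  then have "measure_pmf.expectation D (\<lambda>x. X x ^ 2)
      \<le> measure_pmf.expectation D (\<lambda>x. m^2 + 2 * m * \<bar>X x - m\<bar> + \<bar>X x - m\<bar>^2)"
    by (intro integral_mono integrable_measure_pmf_finite) simp_all
  also have "\<dots> = m^2 + 2 * m * measure_pmf.expectation D (\<lambda>x. \<bar>X x - m\<bar>)
                   + measure_pmf.expectation D (\<lambda>x. \<bar>X x - m\<bar>^2)"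
    by (simp add: integrable_measure_pmf_finite)
  also have "\<dots> \<le> m^2 + 2 * m * (2 * sqrt (pi * \<sigma>)) + 4 * \<sigma>"
    using abs_dev_moments_le_of_tail[OF s tail] \<open>0 \<le> m\<close> by (intro add_mono mult_left_mono) auto
  finally show ?thesis by simp
qed

lemma expectation_power3_le_of_median_tail:
  fixes D :: "'a::finite pmf" and X :: "'a \<Rightarrow> real"
  assumes X0: "\<And>x. 0 \<le> X x" and "0 \<le> m" and s: "0 < \<sigma>"
    and tail: "\<And>t. 0 < t \<Longrightarrow> measure_pmf.prob D {x. t < \<bar>X x - m\<bar>} \<le> 4 * exp (- t\<^sup>2 / \<sigma>)"
  shows "measure_pmf.expectation D (\<lambda>x. X x ^ 3) \<le> 4 * m^3 + 12 * sqrt pi * sqrt \<sigma> ^ 3"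
proof -
  have "X x ^ 3 \<le> 4 * m^3 + 4 * \<bar>X x - m\<bar>^3" for x
  proof -
    have "X x ^ 3 \<le> (m + \<bar>X x - m\<bar>)^3" by (rule power_mono) (use X0[of x] in auto)
    also have "\<dots> \<le> 4 * m^3 + 4 * \<bar>X x - m\<bar>^3"
      using mult_nonneg_nonneg[OF add_nonneg_nonneg[OF \<open>0 \<le> m\<close> abs_ge_zero] zero_le_power2,
          of "X x - m" "m - \<bar>X x - m\<bar>"]
      by (simp add: power2_eq_square power3_eq_cube algebra_simps)
    finally show ?thesis .
  qed
  then have "measure_pmf.expectation D (\<lambda>x. X x ^ 3)
      \<le> measure_pmf.expectation D (\<lambda>x. 4 * m^3 + 4 * \<bar>X x - m\<bar>^3)"
    by (intro integral_mono integrable_measure_pmf_finite) simp_all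
  also have "\<dots> = 4 * m^3 + 4 * measure_pmf.expectation D (\<lambda>x. \<bar>X x - m\<bar>^3)"
    by (simp add: integrable_measure_pmf_finite)
  also have "\<dots> \<le> 4 * m^3 + 12 * sqrt pi * sqrt \<sigma> ^ 3"
    using abs_dev_moments_le_of_tail(3)[OF s tail] by simp
  finally show ?thesis .
qed

theorem mainTheorem6:
  fixes p :: real and M :: "real^'n::finite^'n" and mE :: real
  assumes "0 < p" "p < 1"
    and "is_median (sign_pmf p)
           (\<lambda>b. spec_norm (sqrt ((1 - p) / p) *\<^sub>R hadamard M (C_mat p b))) mE"
  shows "(\<forall>t>0. measure_pmf.prob (sign_pmf p)
             {b. \<bar>spec_norm (sqrt ((1 - p) / p) *\<^sub>R hadamard M (C_mat p b)) - mE\<bar> > t}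
           \<le> 4 * exp (- (p^2 / (8 * (max_abs_entry M)^2)) * t^2))
       \<and> measure_pmf.expectation (sign_pmf p)
             (\<lambda>b. (spec_norm (sqrt ((1 - p) / p) *\<^sub>R hadamard M (C_mat p b)))^2)
           \<le> mE^2 + 32 * (max_abs_entry M)^2 / p^2
              + 8 * mE * sqrt (2 * pi * (max_abs_entry M)^2 / p^2)
       \<and> measure_pmf.expectation (sign_pmf p)
             (\<lambda>b. (spec_norm (sqrt ((1 - p) / p) *\<^sub>R hadamard M (C_mat p b)))^3)
           \<le> 4 * mE^3 + 12 * sqrt pi * (8 * (max_abs_entry M)^2 / p^2) powr (3/2)"
proof -
  let ?K = "max_abs_entry M"
  have tail: "\<forall>t>0. measure_pmf.prob (sign_pmf p) {b. \<bar>spec_norm_E p M b - mE\<bar> > t}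
                \<le> 4 * exp (- (p^2 / (8 * ?K^2)) * t^2)"
    using spec_norm_E_concentration[OF assms] by blast
  have "0 \<le> mE" by (rule median_nonneg[OF assms(3) spec_norm_nonneg])
  show ?thesis
  proof (cases "?K = 0")
    case True
    then have "spec_norm_E p M b = 0" for b
      by (simp add: spec_norm_scaleR spec_norm_eq_0_if_max_abs_entry_eq_0)
    with tail True \<open>0 \<le> mE\<close> show ?thesis by simp
  next
    case False
    define \<sigma> where "\<sigma> = 8 * ?K^2 / p^2"
    have "0 < \<sigma>" using False assms(1) by (simp add: \<sigma>_def)
    have "- (p^2 / (8 * ?K^2)) * t^2 = - t\<^sup>2 / \<sigma>" for t
      using False assms(1) by (simp add: \<sigma>_def field_simps)
    with tail have tail\<sigma>: "\<And>t. 0 < t \<Longrightarrow>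
        measure_pmf.prob (sign_pmf p) {b. t < \<bar>spec_norm_E p M b - mE\<bar>} \<le> 4 * exp (- t\<^sup>2 / \<sigma>)"
      by simp
    have "pi * \<sigma> = 2\<^sup>2 * (2 * pi * ?K^2 / p^2)" by (simp add: \<sigma>_def)
    then have "sqrt (pi * \<sigma>) = 2 * sqrt (2 * pi * ?K^2 / p^2)"
      by (simp only: real_sqrt_mult real_sqrt_abs)
    moreover have "sqrt \<sigma> ^ 3 = \<sigma> powr (3/2)"
      using \<open>0 < \<sigma>\<close> by (simp add: powr_half_sqrt[symmetric] powr_realpow[symmetric] powr_powr)
    ultimately show ?thesis
      using tail expectation_power2_le_of_median_tail[OF spec_norm_nonneg \<open>0 \<le> mE\<close> \<open>0 < \<sigma>\<close> tail\<sigma>]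
        expectation_power3_le_of_median_tail[OF spec_norm_nonneg \<open>0 \<le> mE\<close> \<open>0 < \<sigma>\<close> tail\<sigma>]
      by (simp add: \<sigma>_def)
  qed
qed

end
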